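(* Assume the setting described in the context. Let $\hat{\mathcal{D}}=\{\Delta\in\mathcal{D}:\Delta_j\in\{\Delta_j^-,\Delta_j^+\}\ \text{for all } j\}$ be the set of the $2^m$ vertices of $\mathcal{D}$, enumerated as $\Delta^{(1)},\dots,\Delta^{(2^m)}$, and let $p_i(\kappa)=\det[-(B\Delta^{(i)}C+\kappa^2J_2+\kappa^4J_4)]$. Then for all $\kappa\ge0$, $\Psi^-(\kappa)=\min_i p_i(\kappa)$ and $\Psi^+(\kappa)=\max_i p_i(\kappa)$. Moreover, $\Psi^-$ and $\Psi^+$ are piecewise polynomial: there exist finitely many values $\kappa_1<\kappa_2<\dots<\kappa_M$ such that $\Psi^-$ (and analogously $\Psi^+$) coincides with a polynomial on each interval $[\kappa_h,\kappa_{h+1}]$ (and on the unbounded end intervals); in particular they are piecewise differentiable.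
   Context: Let $n,m\ge 1$, $B\in\mathbb{Z}^{n\times m}$, $C\in\mathbb{Z}^{m\times n}$, and $J_2,J_4\in\mathbb{R}^{n\times n}$ symmetric. Given bounds $0\le \Delta_j^-\le \Delta_j^+<\infty$ ($j=1,\dots,m$), $\mathcal{D}$ is the set of diagonal matrices $\Delta=\mathrm{diag}(\Delta_1,\dots,\Delta_m)$ with $\Delta_j^-\le\Delta_j\le\Delta_j^+$. For real $\kappa\ge0$, $\Psi^-(\kappa)=\min_{\Delta\in\mathcal{D}}\det[-(B\Delta C+\kappa^2J_2+\kappa^4J_4)]$ and $\Psi^+(\kappa)=\max_{\Delta\in\mathcal{D}}\det[-(B\Delta C+\kappa^2J_2+\kappa^4J_4)]$. *)

theory Defs
  imports "HOL-Analysis.Analysis" "HOL-Computational_Algebra.Polynomial"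
begin

definition real_mat :: "int^'c^'r \<Rightarrow> real^'c^'r" where
  "real_mat A = (\<chi> i j. real_of_int (A $ i $ j))"

definition diag_mat :: "('m::finite \<Rightarrow> real) \<Rightarrow> real^'m^'m" where
  "diag_mat d = (\<chi> i j. if i = j then d i else 0)"

definition charfun :: "int^'m^'n \<Rightarrow> int^'n^'m \<Rightarrow> real^'n^'n \<Rightarrow> real^'n^'n
    \<Rightarrow> ('m::finite \<Rightarrow> real) \<Rightarrow> real \<Rightarrow> real" where
  "charfun B C J2 J4 d \<kappa> =
     det (- (real_mat B ** diag_mat d ** real_mat C + (\<kappa>^2) *\<^sub>R J2 + (\<kappa>^4) *\<^sub>R J4))"

text \<open>The box D of admissible diagonal matrices (identified with their diagonals).\<close>
definition box_D :: "('m \<Rightarrow> real) \<Rightarrow> ('m \<Rightarrow> real) \<Rightarrow> ('m \<Rightarrow> real) set" where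
  "box_D lo hi = {d. \<forall>j. lo j \<le> d j \<and> d j \<le> hi j}"

definition vertices_D :: "('m \<Rightarrow> real) \<Rightarrow> ('m \<Rightarrow> real) \<Rightarrow> ('m \<Rightarrow> real) set" where
  "vertices_D lo hi = {d. \<forall>j. d j = lo j \<or> d j = hi j}"

definition Psi_minus where
  "Psi_minus B C J2 J4 lo hi \<kappa> = (INF d\<in>box_D lo hi. charfun B C J2 J4 d \<kappa>)"

definition Psi_plus where
  "Psi_plus B C J2 J4 lo hi \<kappa> = (SUP d\<in>box_D lo hi. charfun B C J2 J4 d \<kappa>)"

definition pieces :: "real list \<Rightarrow> real set set" where
  "pieces ks = (if ks = [] then {{0..}} else
     {{0..hd ks}} \<union> {{ks ! h .. ks ! Suc h} | h. Suc h < length ks} \<union> {{last ks..}})"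

definition piecewise_polynomial :: "(real \<Rightarrow> real) \<Rightarrow> bool" where
  "piecewise_polynomial f \<longleftrightarrow>
     (\<exists>ks. sorted_wrt (<) ks \<and> (\<forall>k\<in>set ks. 0 \<le> k) \<and>
        (\<forall>I\<in>pieces ks. \<exists>q :: real poly. \<forall>\<kappa>\<in>I. f \<kappa> = poly q \<kappa>))"

end

theory Submission
  imports Defs
begin

(* For fixed kappa the matrix depends on Delta_j only through the rank-one term
   Delta_j b_j c_j^T (column j of B times row j of C), so the determinant is affine in each
   Delta_j separately. Moving the coordinates one at a time to the better endpoint shows
   that the extrema over the box are attained at vertices. At each vertex the determinant
   is a polynomial in kappa; two distinct such polynomials agree at only finitely many
   points, and between consecutive ones their order cannot change (intermediate value
   theorem), so the pointwise minimum and maximum coincide with a single polynomial on each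
   piece. *)

lemma det_add_multiples_of_row:
  fixes A :: "'a::comm_ring_1^'n::finite^'n"
  assumes "finite S" and "k \<notin> S"
  shows "det (\<chi> i. if i \<in> S then A$i + c i *s A$k else A$i) = det A"
  using assms
proof (induction S rule: finite_induct)
  case empty
  then show ?case by simp
next
  case (insert l S)
  let ?M = "\<chi> i. if i \<in> S then A$i + c i *s A$k else A$i"
  have "l \<noteq> k" using insert by auto
  moreover have "(\<chi> i. if i \<in> insert l S then A$i + c i *s A$k else A$i)
      = (\<chi> i. if i = l then row l ?M + c l *s row k ?M else row i ?M)"
    using insert by (auto simp: vec_eq_iff row_def)
  ultimately show ?case
    using insert det_row_operation[of l k ?M "c l"] by simp
qed

lemma det_rank_one_update_affine:
  fixes A :: "'a::comm_ring_1^'n::finite^'n" and u v :: "'a^'n"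
  shows "\<exists>c. \<forall>t. det (\<chi> i j. A$i$j + t * (u$i * v$j)) = det A + t * c"
proof -
  have "\<exists>c. \<forall>t. det (\<chi> i. if i \<in> S then A$i + (t * u$i) *s v else A$i) = det A + t * c"
    if "finite S" for S and A :: "'a^'n^'n"
    using that
  proof (induction S arbitrary: A rule: finite_induct)
    case empty
    show ?case by (rule exI[of _ 0]) simp
  next
    case (insert k S)
    let ?M = "\<lambda>A t. \<chi> i. if i \<in> S then A$i + (t * u$i) *s v else A$i"
    define A' where "A' = (\<chi> i. if i = k then v else A$i)"
    have "A'$k = v" by (simp add: A'_def)
    obtain c where c: "\<And>t. det (?M A t) = det A + t * c"
      using insert.IH by blast
    have "det (\<chi> i. if i \<in> insert k S then A$i + (t * u$i) *s v else A$i)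
        = det A + t * (c + u$k * det A')" for t
    proof -
      have "det (\<chi> i. if i \<in> insert k S then A$i + (t * u$i) *s v else A$i)
          = det (\<chi> i. if i = k then A$i + (t * u$k) *s v else ?M A t $ i)"
        using insert.hyps by (intro arg_cong[where f = det]) (auto simp: vec_eq_iff)
      also have "\<dots> = det (\<chi> i. if i = k then A$i else ?M A t $ i)
          + (t * u$k) * det (\<chi> i. if i = k then v else ?M A t $ i)"
        by (simp only: det_row_add det_row_mul)
      also have "(\<chi> i. if i = k then A$i else ?M A t $ i) = ?M A t"
        using insert.hyps by (auto simp: vec_eq_iff)
      also have "(\<chi> i. if i = k then v else ?M A t $ i) = ?M A' t"
        using insert.hyps by (auto simp: vec_eq_iff A'_def)
      also have "det (?M A' t) = det A'"
        using det_add_multiples_of_row[OF insert.hyps, of A' "\<lambda>i. t * u$i"]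
        unfolding \<open>A'$k = v\<close> .
      finally show ?thesis using c by (simp add: algebra_simps)
    qed
    then show ?case by blast
  qed
  from this[of UNIV A] obtain c
    where c: "\<And>t. det (\<chi> i. if i \<in> UNIV then A$i + (t * u$i) *s v else A$i) = det A + t * c"
    by auto
  have "(\<chi> i j. A$i$j + t * (u$i * v$j))
      = (\<chi> i. if i \<in> UNIV then A$i + (t * u$i) *s v else A$i)" for t
    by (simp add: vec_eq_iff mult.assoc)
  then show ?thesis by (intro exI[of _ c] allI) (simp only: c)
qed

lemma det_poly_entries:
  fixes M :: "'a::comm_ring_1 \<Rightarrow> 'a^'n::finite^'n"
  assumes "\<And>i j. \<exists>q. \<forall>x. M x $ i $ j = poly q x"
  shows "\<exists>Q. \<forall>x. det (M x) = poly Q x"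
proof -
  obtain q where q: "\<And>i j x. M x $ i $ j = poly (q i j) x"
    using assms by metis
  let ?Q = "\<Sum>p | p permutes (UNIV :: 'n set). smult (of_int (sign p)) (\<Prod>i\<in>UNIV. q i (p i))"
  have "det (M x) = poly ?Q x" for x
    by (simp add: det_def poly_sum poly_prod q)
  then show ?thesis by blast
qed

definition multiaffine :: "(('i \<Rightarrow> real) \<Rightarrow> real) \<Rightarrow> bool" where
  "multiaffine f \<longleftrightarrow> (\<forall>d j. \<exists>a b. \<forall>t. f (d(j := t)) = a + t * b)"

lemma multiaffine_uminus:
  assumes "multiaffine f"
  shows "multiaffine (\<lambda>d. - f d)"
  unfolding multiaffine_def
proof (intro allI)
  fix d j
  obtain a b where "\<forall>t. f (d(j := t)) = a + t * b"
    using assms unfolding multiaffine_def by blast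
  then have "\<forall>t. - f (d(j := t)) = - a + t * - b" by simp
  then show "\<exists>a b. \<forall>t. - f (d(j := t)) = a + t * b" by blast
qed

lemma affine_endpoint_le:
  fixes a b lo hi x :: real
  assumes "lo \<le> x" "x \<le> hi"
  shows "\<exists>t\<in>{lo, hi}. a + t * b \<le> a + x * b"
proof (cases "0 \<le> b")
  case True
  then show ?thesis using assms(1) mult_right_mono by fastforce
next
  case False
  then show ?thesis using assms(2) mult_right_mono_neg[of x hi b] by fastforce
qed

lemma multiaffine_vertex_le:
  fixes f :: "('m::finite \<Rightarrow> real) \<Rightarrow> real"
  assumes f: "multiaffine f" and lo_hi: "\<And>j. lo j \<le> hi j" and d: "d \<in> box_D lo hi"
  shows "\<exists>v\<in>vertices_D lo hi. f v \<le> f d"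
proof -
  have "\<exists>v\<in>vertices_D lo hi. f v \<le> f d"
    if "finite S" "d \<in> box_D lo hi" "{j. d j \<noteq> lo j \<and> d j \<noteq> hi j} \<subseteq> S" for S d
    using that
  proof (induction S arbitrary: d rule: finite_induct)
    case empty
    then have "d \<in> vertices_D lo hi" by (auto simp: vertices_D_def)
    then show ?case by blast
  next
    case (insert j S)
    obtain a b where ab: "\<And>t. f (d(j := t)) = a + t * b"
      using f unfolding multiaffine_def by blast
    have "lo j \<le> d j" "d j \<le> hi j" using insert.prems by (auto simp: box_D_def)
    then obtain t where t: "t \<in> {lo j, hi j}" "a + t * b \<le> a + d j * b"
      using affine_endpoint_le by blast
    have "d(j := t) \<in> box_D lo hi"
      using insert.prems t(1) lo_hi[of j] by (auto simp: box_D_def)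
    moreover have "{i. (d(j := t)) i \<noteq> lo i \<and> (d(j := t)) i \<noteq> hi i} \<subseteq> S"
      using insert.prems t(1) by auto
    ultimately obtain v where "v \<in> vertices_D lo hi" "f v \<le> f (d(j := t))"
      using insert.IH by blast
    moreover have "f (d(j := t)) \<le> f d"
      using ab[of t] ab[of "d j"] t(2) by simp
    ultimately show ?case by (meson order_trans)
  qed
  from this[of UNIV d] show ?thesis using d by simp
qed

lemma INF_eq_Min_if_dominated:
  fixes f :: "'a \<Rightarrow> 'b::conditionally_complete_linorder"
  assumes "finite V" "V \<noteq> {}" "V \<subseteq> A" and "\<And>a. a \<in> A \<Longrightarrow> \<exists>v\<in>V. f v \<le> f a"
  shows "(INF a\<in>A. f a) = Min (f ` V)"
proof (rule cInf_eq_minimum)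
  show "Min (f ` V) \<in> f ` A" using Min_in[of "f ` V"] assms(1-3) by blast
next
  fix x assume "x \<in> f ` A"
  then obtain a where "a \<in> A" "x = f a" by blast
  then obtain v where "v \<in> V" "f v \<le> x" using assms(4) by blast
  moreover have "Min (f ` V) \<le> f v" using assms(1) \<open>v \<in> V\<close> by simp
  ultimately show "Min (f ` V) \<le> x" by order
qed

lemma SUP_eq_Max_if_dominated:
  fixes f :: "'a \<Rightarrow> 'b::conditionally_complete_linorder"
  assumes "finite V" "V \<noteq> {}" "V \<subseteq> A" and "\<And>a. a \<in> A \<Longrightarrow> \<exists>v\<in>V. f a \<le> f v"
  shows "(SUP a\<in>A. f a) = Max (f ` V)"
proof (rule cSup_eq_maximum)
  show "Max (f ` V) \<in> f ` A" using Max_in[of "f ` V"] assms(1-3) by blast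
next
  fix x assume "x \<in> f ` A"
  then obtain a where "a \<in> A" "x = f a" by blast
  then obtain v where "v \<in> V" "x \<le> f v" using assms(4) by blast
  moreover have "f v \<le> Max (f ` V)" using assms(1) \<open>v \<in> V\<close> by simp
  ultimately show "x \<le> Max (f ` V)" by order
qed

lemma finite_vertices_D: "finite (vertices_D lo (hi :: 'm::finite \<Rightarrow> real))"
proof -
  have "vertices_D lo hi = Pi\<^sub>E UNIV (\<lambda>j. {lo j, hi j})"
    by (auto simp: vertices_D_def PiE_UNIV_domain)
  then show ?thesis by (simp add: finite_PiE)
qed

lemma vertices_D_subset_box_D:
  assumes "\<And>j. lo j \<le> hi j"
  shows "vertices_D lo hi \<subseteq> box_D lo hi"
proof
  fix d assume d: "d \<in> vertices_D lo hi"
  have "lo j \<le> d j \<and> d j \<le> hi j" for j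
  proof -
    from d have "d j = lo j \<or> d j = hi j" by (simp add: vertices_D_def)
    then show ?thesis using assms[of j] by auto
  qed
  then show "d \<in> box_D lo hi" by (simp add: box_D_def)
qed

lemma lo_in_vertices_D: "lo \<in> vertices_D lo hi"
  by (simp add: vertices_D_def)

lemma multiaffine_INF_box_D:
  fixes f :: "('m::finite \<Rightarrow> real) \<Rightarrow> real"
  assumes "multiaffine f" and lo_hi: "\<And>j. lo j \<le> hi j"
  shows "(INF d\<in>box_D lo hi. f d) = Min (f ` vertices_D lo hi)"
proof (rule INF_eq_Min_if_dominated)
  show "vertices_D lo hi \<subseteq> box_D lo hi" using lo_hi by (rule vertices_D_subset_box_D)
  show "\<exists>v\<in>vertices_D lo hi. f v \<le> f d" if "d \<in> box_D lo hi" for d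
    using multiaffine_vertex_le[OF assms that] .
qed (use finite_vertices_D lo_in_vertices_D in blast)+

lemma multiaffine_SUP_box_D:
  fixes f :: "('m::finite \<Rightarrow> real) \<Rightarrow> real"
  assumes "multiaffine f" and lo_hi: "\<And>j. lo j \<le> hi j"
  shows "(SUP d\<in>box_D lo hi. f d) = Max (f ` vertices_D lo hi)"
proof (rule SUP_eq_Max_if_dominated)
  show "vertices_D lo hi \<subseteq> box_D lo hi" using lo_hi by (rule vertices_D_subset_box_D)
  show "\<exists>v\<in>vertices_D lo hi. f d \<le> f v" if "d \<in> box_D lo hi" for d
    using multiaffine_vertex_le[OF multiaffine_uminus[OF assms(1)] lo_hi that] by auto
qed (use finite_vertices_D lo_in_vertices_D in blast)+

lemma diag_mat_product_entry:
  fixes X :: "real^'m::finite^'n" and Y :: "real^'k^'m"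
  shows "(X ** diag_mat e ** Y)$i$k = (\<Sum>l\<in>UNIV. X$i$l * e l * Y$l$k)"
proof -
  have "(X ** diag_mat e)$i$l = X$i$l * e l" for l
    by (simp add: matrix_matrix_mult_def diag_mat_def if_distrib cong: if_cong)
  then show ?thesis by (simp add: matrix_matrix_mult_def)
qed

lemma diag_mat_update_product_entry:
  fixes X :: "real^'m::finite^'n" and Y :: "real^'k^'m"
  shows "(X ** diag_mat (d(j := t)) ** Y)$i$k
    = (X ** diag_mat (d(j := 0)) ** Y)$i$k + t * (X$i$j * Y$j$k)"
proof -
  have "X$i$l * (d(j := t)) l * Y$l$k
      = X$i$l * (d(j := 0)) l * Y$l$k + (if l = j then t * (X$i$j * Y$j$k) else 0)" for l
    by auto
  then show ?thesis by (simp add: diag_mat_product_entry sum.distrib)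
qed

lemma multiaffine_charfun:
  fixes B :: "int^'m::finite^'n::finite"
  shows "multiaffine (\<lambda>d. charfun B C J2 J4 d \<kappa>)"
  unfolding multiaffine_def
proof (intro allI)
  fix d and j :: 'm
  define A where "A = - (real_mat B ** diag_mat (d(j := 0)) ** real_mat C
                         + (\<kappa>^2) *\<^sub>R J2 + (\<kappa>^4) *\<^sub>R J4)"
  define u :: "real^'n" where "u = (\<chi> i. - real_mat B $ i $ j)"
  have "charfun B C J2 J4 (d(j := t)) \<kappa> = det (\<chi> i k. A$i$k + t * (u$i * real_mat C$j$k))" for t
    unfolding charfun_def
    \<comment> \<open>instantiated, since as a simp rule the entry lemma would loop at t = 0\<close>
    by (intro arg_cong[where f = det])
       (simp add: vec_eq_iff diag_mat_update_product_entry[of _ d j t] A_def u_def)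
  then show "\<exists>a b. \<forall>t. charfun B C J2 J4 (d(j := t)) \<kappa> = a + t * b"
    using det_rank_one_update_affine[of A u "real_mat C $ j"] by metis
qed

lemma charfun_poly:
  fixes B :: "int^'m::finite^'n::finite"
  shows "\<exists>Q. \<forall>\<kappa>. charfun B C J2 J4 d \<kappa> = poly Q \<kappa>"
  unfolding charfun_def
proof (rule det_poly_entries)
  fix i k
  let ?X = "real_mat B ** diag_mat d ** real_mat C"
  have "(- (?X + (x^2) *\<^sub>R J2 + (x^4) *\<^sub>R J4))$i$k
     = poly ([:- ?X$i$k:] + monom (- J2$i$k) 2 + monom (- J4$i$k) 4) x" for x
    by (simp add: poly_monom algebra_simps)
  then show "\<exists>q. \<forall>x. (- (?X + (x^2) *\<^sub>R J2 + (x^4) *\<^sub>R J4))$i$k = poly q x" by blast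
qed

definition poly_crossings :: "real poly set \<Rightarrow> real set" where
  "poly_crossings F = {x. \<exists>p\<in>F. \<exists>q\<in>F. p \<noteq> q \<and> poly p x = poly q x}"

lemma finite_poly_crossings:
  assumes "finite F"
  shows "finite (poly_crossings F)"
proof -
  have "poly_crossings F = (\<Union>(p, q)\<in>{(p, q)\<in>F \<times> F. p \<noteq> q}. {x. poly (p - q) x = 0})"
    by (auto simp: poly_crossings_def)
  moreover have "finite {x. poly (p - q) x = 0}" if "p \<noteq> q" for p q :: "real poly"
    using that by (intro poly_roots_finite) simp
  moreover have "finite {(p, q)\<in>F \<times> F. p \<noteq> q}"
    using assms by (auto intro: finite_subset[of _ "F \<times> F"])
  ultimately show ?thesis by (auto intro!: finite_UN_I)
qed

lemma poly_nonneg_if_no_root_between: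
  fixes p :: "real poly"
  assumes "0 < poly p x0" and "\<And>y. min x0 x < y \<Longrightarrow> y < max x0 x \<Longrightarrow> poly p y \<noteq> 0"
  shows "0 \<le> poly p x"
proof (rule ccontr)
  assume "\<not> 0 \<le> poly p x"
  then have neg: "poly p x < 0" by simp
  then consider "x < x0" | "x0 < x" using assms(1) by (cases x x0 rule: linorder_cases) auto
  then obtain y where "min x0 x < y" "y < max x0 x" "poly p y = 0"
  proof cases
    case 1
    then show ?thesis using poly_IVT_pos[OF 1 neg assms(1)] that by auto
  next
    case 2
    then show ?thesis using poly_IVT_neg[OF 2 assms(1) neg] that by auto
  qed
  then show False using assms(2) by blast
qed

lemma Min_polys_on_crossing_free:
  fixes F :: "real poly set"
  assumes "finite F" "F \<noteq> {}" and x0: "x0 \<in> I" "x0 \<notin> poly_crossings F"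
    and crossing_free: "\<And>x y. x \<in> I \<Longrightarrow> y \<in> I \<Longrightarrow> {x<..<y} \<inter> poly_crossings F = {}"
  shows "\<exists>p\<in>F. \<forall>x\<in>I. Min ((\<lambda>q. poly q x) ` F) = poly p x"
proof -
  have "Min ((\<lambda>q. poly q x0) ` F) \<in> (\<lambda>q. poly q x0) ` F"
    using assms(1,2) by simp
  then obtain p where p: "p \<in> F" "Min ((\<lambda>q. poly q x0) ` F) = poly p x0" by blast
  have "poly p x \<le> poly q x" if x: "x \<in> I" and q: "q \<in> F" for x q
  proof (cases "q = p")
    case False
    have "poly p x0 \<le> poly q x0" using p q assms(1) by (metis Min_le finite_imageI image_eqI)
    moreover have "poly p x0 \<noteq> poly q x0"
      using x0(2) p(1) q False by (auto simp: poly_crossings_def)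
    ultimately have "0 < poly (q - p) x0" by simp
    moreover have "poly (q - p) y \<noteq> 0" if "min x0 x < y" "y < max x0 x" for y
    proof -
      have "y \<notin> poly_crossings F"
        using crossing_free[OF x0(1) x] crossing_free[OF x x0(1)] that
        by (cases "x0 \<le> x") auto
      then show ?thesis using p(1) q False by (auto simp: poly_crossings_def)
    qed
    ultimately have "0 \<le> poly (q - p) x" by (rule poly_nonneg_if_no_root_between)
    then show ?thesis by simp
  qed simp
  then show ?thesis
    using p(1) assms(1) by (intro bexI[of _ p] ballI Min_eqI) auto
qed

lemma pieces_cases:
  assumes "I \<in> pieces ks"
  obtains "ks = []" "I = {0..}"
    | "ks \<noteq> []" "I = {0..hd ks}"
    | h where "Suc h < length ks" "I = {ks ! h .. ks ! Suc h}"
    | "ks \<noteq> []" "I = {last ks..}"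
  using assms unfolding pieces_def by (auto split: if_splits)

lemma pieces_subset_nonneg:
  assumes "\<forall>k\<in>set ks. 0 \<le> k" "I \<in> pieces ks"
  shows "I \<subseteq> {0..}"
  using assms(2) by (cases rule: pieces_cases) (use assms(1) in auto)

lemma pieces_side_of_breakpoint:
  assumes "sorted_wrt (<) ks" "k \<in> set ks" "I \<in> pieces ks"
  shows "I \<subseteq> {..k} \<or> I \<subseteq> {k..}"
proof -
  have sorted: "sorted ks" using assms(1) by (rule strict_sorted_imp_sorted)
  obtain i where i: "i < length ks" "k = ks ! i" using assms(2) by (auto simp: in_set_conv_nth)
  from assms(3) show ?thesis
  proof (cases rule: pieces_cases)
    case 2
    then have "hd ks \<le> k" using sorted_nth_mono[OF sorted, of 0 i] i by (simp add: hd_conv_nth)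
    then show ?thesis using 2 by auto
  next
    case (3 h)
    show ?thesis
    proof (cases "i \<le> h")
      case True
      then have "k \<le> ks ! h" using sorted_nth_mono[OF sorted True] 3 i by simp
      then show ?thesis using 3 by auto
    next
      case False
      then have "ks ! Suc h \<le> k" using sorted_nth_mono[OF sorted, of "Suc h" i] i by simp
      then show ?thesis using 3 by auto
    qed
  next
    case 4
    then have "k \<le> last ks"
      using sorted_nth_mono[OF sorted, of i "length ks - 1"] i by (simp add: last_conv_nth)
    then show ?thesis using 4 by auto
  qed (use assms(2) in simp)
qed

lemma pieces_nondegenerate:
  assumes "sorted_wrt (<) ks" "\<forall>k\<in>set ks. 0 < k" "I \<in> pieces ks"
  shows "\<exists>a b. a < b \<and> {a..b} \<subseteq> I"
  using assms(3)
proof (cases rule: pieces_cases)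
  case 1
  then show ?thesis by (intro exI[of _ 0] exI[of _ 1]) auto
next
  case 2
  then show ?thesis using assms(2) by (intro exI[of _ 0] exI[of _ "hd ks"]) auto
next
  case (3 h)
  then show ?thesis using sorted_wrt_nth_less[OF assms(1), of h "Suc h"] by auto
next
  case 4
  then show ?thesis by (intro exI[of _ "last ks"] exI[of _ "last ks + 1"]) auto
qed

lemma piecewise_polynomialI:
  fixes g :: "real \<Rightarrow> real" and Z :: "real set"
  assumes "finite Z"
    and poly_on: "\<And>I x0. I \<subseteq> {0..} \<Longrightarrow> x0 \<in> I \<Longrightarrow> x0 \<notin> Z \<Longrightarrow>
       (\<And>x y. x \<in> I \<Longrightarrow> y \<in> I \<Longrightarrow> {x<..<y} \<inter> Z = {}) \<Longrightarrow> \<exists>q. \<forall>\<kappa>\<in>I. g \<kappa> = poly q \<kappa>"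
  shows "piecewise_polynomial g"
proof -
  \<comment> \<open>0 is left out so that the first piece {0..hd ks} is nondegenerate\<close>
  define ks where "ks = sorted_list_of_set (Z \<inter> {0<..})"
  have ks: "sorted_wrt (<) ks" "set ks = Z \<inter> {0<..}"
    using assms(1) by (simp_all add: ks_def)
  have "\<exists>q. \<forall>\<kappa>\<in>I. g \<kappa> = poly q \<kappa>" if I: "I \<in> pieces ks" for I
  proof -
    have nonneg: "I \<subseteq> {0..}" using ks(2) I by (intro pieces_subset_nonneg) auto
    have free: "{x<..<y} \<inter> Z = {}" if "x \<in> I" "y \<in> I" for x y
    proof (rule ccontr)
      assume "{x<..<y} \<inter> Z \<noteq> {}"
      then obtain z where z: "x < z" "z < y" "z \<in> Z" by auto
      then have "z \<in> set ks" using ks(2) nonneg \<open>x \<in> I\<close> by force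
      then have "I \<subseteq> {..z} \<or> I \<subseteq> {z..}" using pieces_side_of_breakpoint ks(1) I by blast
      then show False using that z by fastforce
    qed
    obtain a b where ab: "a < b" "{a..b} \<subseteq> I"
      using pieces_nondegenerate[OF ks(1) _ I] ks(2) by auto
    have "a \<in> I" "b \<in> I" "(a + b) / 2 \<in> I" using ab by auto
    moreover have "(a + b) / 2 \<in> {a<..<b}" using ab(1) by simp
    ultimately have "(a + b) / 2 \<notin> Z" using free by blast
    with \<open>(a + b) / 2 \<in> I\<close>
    show ?thesis using poly_on[OF nonneg _ _ free] by blast
  qed
  moreover have "\<forall>k\<in>set ks. 0 \<le> k" using ks(2) by auto
  ultimately show ?thesis unfolding piecewise_polynomial_def using ks(1) by blast
qed

lemma piecewise_polynomial_uminus: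
  assumes "piecewise_polynomial g"
  shows "piecewise_polynomial (\<lambda>x. - g x)"
proof -
  have "\<exists>q. \<forall>\<kappa>\<in>I. - g \<kappa> = poly q \<kappa>" if "\<exists>q. \<forall>\<kappa>\<in>I. g \<kappa> = poly q \<kappa>" for I
    using that by (metis poly_minus)
  then show ?thesis using assms unfolding piecewise_polynomial_def by meson
qed

lemma piecewise_polynomial_Min_polys:
  fixes F :: "real poly set"
  assumes "finite F" "F \<noteq> {}" and g: "\<And>\<kappa>. 0 \<le> \<kappa> \<Longrightarrow> g \<kappa> = Min ((\<lambda>q. poly q \<kappa>) ` F)"
  shows "piecewise_polynomial g"
proof (rule piecewise_polynomialI[OF finite_poly_crossings[OF assms(1)]])
  fix I x0
  assume "I \<subseteq> {0..}" "x0 \<in> I" "x0 \<notin> poly_crossings F"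
    and "\<And>x y. x \<in> I \<Longrightarrow> y \<in> I \<Longrightarrow> {x<..<y} \<inter> poly_crossings F = {}"
  then obtain p where "\<forall>\<kappa>\<in>I. Min ((\<lambda>q. poly q \<kappa>) ` F) = poly p \<kappa>"
    using Min_polys_on_crossing_free[OF assms(1,2)] by blast
  moreover have "g \<kappa> = Min ((\<lambda>q. poly q \<kappa>) ` F)" if "\<kappa> \<in> I" for \<kappa>
    using g \<open>I \<subseteq> {0..}\<close> that by auto
  ultimately show "\<exists>q. \<forall>\<kappa>\<in>I. g \<kappa> = poly q \<kappa>" by auto
qed

lemma piecewise_polynomial_Max_polys:
  fixes F :: "real poly set"
  assumes "finite F" "F \<noteq> {}" and g: "\<And>\<kappa>. 0 \<le> \<kappa> \<Longrightarrow> g \<kappa> = Max ((\<lambda>q. poly q \<kappa>) ` F)"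
  shows "piecewise_polynomial g"
proof -
  have "piecewise_polynomial (\<lambda>\<kappa>. - g \<kappa>)"
  proof (rule piecewise_polynomial_Min_polys)
    show "finite (uminus ` F)" "uminus ` F \<noteq> {}" using assms(1,2) by auto
    fix \<kappa> :: real assume "0 \<le> \<kappa>"
    then have "- g \<kappa> = Min (uminus ` (\<lambda>q. poly q \<kappa>) ` F)" using g assms(1,2) by simp
    then show "- g \<kappa> = Min ((\<lambda>q. poly q \<kappa>) ` uminus ` F)" by (simp add: image_image)
  qed
  then show ?thesis using piecewise_polynomial_uminus by fastforce
qed

theorem proposition1:
  fixes B :: "int^'m::finite^'n::finite" and C :: "int^'n^'m"
    and J2 J4 :: "real^'n^'n" and lo hi :: "'m \<Rightarrow> real"
  assumes "transpose J2 = J2" and "transpose J4 = J4"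
    and "\<And>j. 0 \<le> lo j" and "\<And>j. lo j \<le> hi j"
  shows "(\<forall>\<kappa>\<ge>0. Psi_minus B C J2 J4 lo hi \<kappa>
                  = Min ((\<lambda>d. charfun B C J2 J4 d \<kappa>) ` vertices_D lo hi)
              \<and> Psi_plus B C J2 J4 lo hi \<kappa>
                  = Max ((\<lambda>d. charfun B C J2 J4 d \<kappa>) ` vertices_D lo hi))
         \<and> piecewise_polynomial (Psi_minus B C J2 J4 lo hi)
         \<and> piecewise_polynomial (Psi_plus B C J2 J4 lo hi)"
proof -
  let ?V = "vertices_D lo hi"
  have Psi_minus: "Psi_minus B C J2 J4 lo hi \<kappa> = Min ((\<lambda>d. charfun B C J2 J4 d \<kappa>) ` ?V)"
    and Psi_plus: "Psi_plus B C J2 J4 lo hi \<kappa> = Max ((\<lambda>d. charfun B C J2 J4 d \<kappa>) ` ?V)" for \<kappa>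
    unfolding Psi_minus_def Psi_plus_def
    using multiaffine_INF_box_D multiaffine_SUP_box_D multiaffine_charfun assms(4) by blast+
  obtain Q where Q: "\<And>d \<kappa>. charfun B C J2 J4 d \<kappa> = poly (Q d) \<kappa>"
    using charfun_poly[of B C J2 J4] by metis
  have vertex_values: "(\<lambda>d. charfun B C J2 J4 d \<kappa>) ` ?V = (\<lambda>q. poly q \<kappa>) ` Q ` ?V" for \<kappa>
    by (simp add: image_image Q)
  have "finite (Q ` ?V)" "Q ` ?V \<noteq> {}"
    using finite_vertices_D[of lo hi] lo_in_vertices_D[of lo hi] by auto
  then have "piecewise_polynomial (Psi_minus B C J2 J4 lo hi)"
    and "piecewise_polynomial (Psi_plus B C J2 J4 lo hi)"
    by (simp_all add: piecewise_polynomial_Min_polys piecewise_polynomial_Max_polys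
        Psi_minus Psi_plus vertex_values)
  then show ?thesis using Psi_minus Psi_plus by blast
qed

end
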